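(* Let $\succ$ be a binary relation on $\mathcal{F}$ admitting a unique hope-and-prepare representation $(u,C,D)$: $u:X\to\mathbb{R}$ non-constant affine (unique up to positive affine transformation), $C,D\subseteq\Delta$ unique convex compact sets with $C\cap D\neq\emptyset$, and for all $f,g\in\mathcal{F}$, $f\succ g$ iff $\min_{p\in C}\int u(f)\,dp>\min_{p\in C}\int u(g)\,dp$ and $\max_{p\in D}\int u(f)\,dp>\max_{p\in D}\int u(g)\,dp$. For a binary relation $\succ^*$ on $\mathcal{F}$, the following are equivalent: (i) $\succ^*$ is an invariant biseparable preference and an extension of $\succ$ (i.e. $f\succ g$ implies $f\succ^* g$ for all $f,g\in\mathcal{F}$); (ii) there exists $\alpha\in[0,1]$ such that for all $f,g\in\mathcal{F}$, $$f\succ^* g\iff \alpha\min_{p\in C}\int u(f)\,dp+(1-\alpha)\max_{p\in D}\int u(f)\,dp>\alpha\min_{p\in C}\int u(g)\,dp+(1-\alpha)\max_{p\in D}\int u(g)\,dp,$$ and this $\alpha$ is unique whenever $\succ$ is not complete.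
   Context: $S$ is a set of states with algebra $\Sigma$; $X$ is a non-singleton convex subset of a real vector space; $\mathcal{F}$ is the set of simple acts $f:S\to X$ ($\Sigma$-measurable, finitely many values), with pointwise mixtures; elements of $X$ are identified with constant acts. $\Delta$ is the set of finitely additive probability measures on $(S,\Sigma)$ with the weak* topology. A binary relation $\succ^*$ on $\mathcal{F}$ is invariant biseparable if it is asymmetric, complete and negatively transitive and satisfies: (continuity) for all $f,g,h$, $\{\alpha\in[0,1]:\alpha f+(1-\alpha)g\succ^* h\}$ and $\{\alpha\in[0,1]:h\succ^*\alpha f+(1-\alpha)g\}$ are open in $[0,1]$; (certainty independence) for all $f,g\in\mathcal{F}$, $x\in X$, $\alpha\in(0,1)$, $f\succ^* g$ iff $\alpha f+(1-\alpha)x\succ^*\alpha g+(1-\alpha)x$; (monotonicity) if $f(s)\succ^* g(s)$ for all $s\in S$ then $f\succ^* g$. *)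

theory Defs
  imports "HOL-Analysis.Analysis"
begin

text \<open>States have type 'a, the algebra of events is Sig :: 'a set set (algebra on UNIV),
  outcomes have type 'b (a real vector space) and X :: 'b set is the convex outcome set.\<close>

definition simple_acts :: "'a set set \<Rightarrow> 'b set \<Rightarrow> ('a \<Rightarrow> 'b) set" where
  "simple_acts Sig X = {f. range f \<subseteq> X \<and> finite (range f) \<and> (\<forall>x. f -` {x} \<in> Sig)}"

definition mix :: "real \<Rightarrow> ('a \<Rightarrow> 'b::real_vector) \<Rightarrow> ('a \<Rightarrow> 'b) \<Rightarrow> ('a \<Rightarrow> 'b)" where
  "mix a f g = (\<lambda>s. a *\<^sub>R f s + (1 - a) *\<^sub>R g s)"

text \<open>Finitely additive probability measures on (UNIV, Sig), represented as set functions
  that vanish outside Sig (so that each measure has a unique representative).\<close>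
definition fa_probs :: "'a set set \<Rightarrow> ('a set \<Rightarrow> real) set" where
  "fa_probs Sig = {p. (\<forall>A\<in>Sig. 0 \<le> p A) \<and> p UNIV = 1
      \<and> (\<forall>A\<in>Sig. \<forall>B\<in>Sig. A \<inter> B = {} \<longrightarrow> p (A \<union> B) = p A + p B)
      \<and> (\<forall>A. A \<notin> Sig \<longrightarrow> p A = 0)}"

definition simple_int :: "('a set \<Rightarrow> real) \<Rightarrow> ('a \<Rightarrow> real) \<Rightarrow> real" where
  "simple_int p \<phi> = (\<Sum>y\<in>range \<phi>. y * p (\<phi> -` {y}))"

definition convex_measures :: "('a set \<Rightarrow> real) set \<Rightarrow> bool" where
  "convex_measures C \<longleftrightarrow> (\<forall>p\<in>C. \<forall>q\<in>C. \<forall>t::real. 0 \<le> t \<and> t \<le> 1 \<longrightarrow>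
      (\<lambda>A. t * p A + (1 - t) * q A) \<in> C)"

definition affine_on :: "'b::real_vector set \<Rightarrow> ('b \<Rightarrow> real) \<Rightarrow> bool" where
  "affine_on X u \<longleftrightarrow> (\<forall>x\<in>X. \<forall>y\<in>X. \<forall>t::real. 0 \<le> t \<and> t \<le> 1 \<longrightarrow>
      u (t *\<^sub>R x + (1 - t) *\<^sub>R y) = t * u x + (1 - t) * u y)"

text \<open>Minimum over C / maximum over D of expected utility (C, D compact nonempty,
  so Inf / Sup are attained).\<close>
definition minEU :: "('b \<Rightarrow> real) \<Rightarrow> ('a set \<Rightarrow> real) set \<Rightarrow> ('a \<Rightarrow> 'b) \<Rightarrow> real" where
  "minEU u C f = Inf ((\<lambda>p. simple_int p (u \<circ> f)) ` C)"

definition maxEU :: "('b \<Rightarrow> real) \<Rightarrow> ('a set \<Rightarrow> real) set \<Rightarrow> ('a \<Rightarrow> 'b) \<Rightarrow> real" where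
  "maxEU u D f = Sup ((\<lambda>p. simple_int p (u \<circ> f)) ` D)"

text \<open>Compactness is w.r.t. the product
  topology on 'a set => real, which on the set of finitely additive probabilities coincides
  with the weak* topology.\<close>
definition hp_rep :: "'a set set \<Rightarrow> 'b::real_vector set \<Rightarrow> (('a \<Rightarrow> 'b) \<Rightarrow> ('a \<Rightarrow> 'b) \<Rightarrow> bool)
     \<Rightarrow> ('b \<Rightarrow> real) \<Rightarrow> ('a set \<Rightarrow> real) set \<Rightarrow> ('a set \<Rightarrow> real) set \<Rightarrow> bool" where
  "hp_rep Sig X R u C D \<longleftrightarrow>
     affine_on X u \<and> (\<exists>x\<in>X. \<exists>y\<in>X. u x \<noteq> u y) \<and>
     C \<subseteq> fa_probs Sig \<and> D \<subseteq> fa_probs Sig \<and> convex_measures C \<and> convex_measures D \<and>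
     compact C \<and> compact D \<and> C \<inter> D \<noteq> {} \<and>
     (\<forall>f\<in>simple_acts Sig X. \<forall>g\<in>simple_acts Sig X.
        R f g \<longleftrightarrow> minEU u C f > minEU u C g \<and> maxEU u D f > maxEU u D g)"

definition unique_hp_rep :: "'a set set \<Rightarrow> 'b::real_vector set \<Rightarrow> (('a \<Rightarrow> 'b) \<Rightarrow> ('a \<Rightarrow> 'b) \<Rightarrow> bool)
     \<Rightarrow> ('b \<Rightarrow> real) \<Rightarrow> ('a set \<Rightarrow> real) set \<Rightarrow> ('a set \<Rightarrow> real) set \<Rightarrow> bool" where
  "unique_hp_rep Sig X R u C D \<longleftrightarrow> hp_rep Sig X R u C D \<and>
     (\<forall>u' C' D'. hp_rep Sig X R u' C' D' \<longrightarrow>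
        C' = C \<and> D' = D \<and> (\<exists>a b. a > 0 \<and> (\<forall>x\<in>X. u' x = a * u x + b)))"

definition rel_equiv :: "('f \<Rightarrow> 'f \<Rightarrow> bool) \<Rightarrow> 'f set \<Rightarrow> 'f \<Rightarrow> 'f \<Rightarrow> bool" where
  "rel_equiv R F f g \<longleftrightarrow> (\<forall>h\<in>F. (R f h \<longleftrightarrow> R g h) \<and> (R h f \<longleftrightarrow> R h g))"

definition rel_complete :: "('f \<Rightarrow> 'f \<Rightarrow> bool) \<Rightarrow> 'f set \<Rightarrow> bool" where
  "rel_complete R F \<longleftrightarrow> (\<forall>f\<in>F. \<forall>g\<in>F. R f g \<or> R g f \<or> rel_equiv R F f g)"

definition invariant_biseparable :: "'a set set \<Rightarrow> 'b::real_vector set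
     \<Rightarrow> (('a \<Rightarrow> 'b) \<Rightarrow> ('a \<Rightarrow> 'b) \<Rightarrow> bool) \<Rightarrow> bool" where
  "invariant_biseparable Sig X R \<longleftrightarrow> (let F = simple_acts Sig X in
     (\<forall>f\<in>F. \<forall>g\<in>F. R f g \<longrightarrow> \<not> R g f) \<and>
     rel_complete R F \<and>
     (\<forall>f\<in>F. \<forall>g\<in>F. \<forall>h\<in>F. \<not> R f g \<and> \<not> R g h \<longrightarrow> \<not> R f h) \<and>
     (\<forall>f\<in>F. \<forall>g\<in>F. \<forall>h\<in>F.
        openin (top_of_set {0..1}) {a\<in>{0..1::real}. R (mix a f g) h} \<and>
        openin (top_of_set {0..1}) {a\<in>{0..1::real}. R h (mix a f g)}) \<and>
     (\<forall>f\<in>F. \<forall>g\<in>F. \<forall>x\<in>X. \<forall>a::real. 0 < a \<and> a < 1 \<longrightarrow>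
        (R f g \<longleftrightarrow> R (mix a f (\<lambda>_. x)) (mix a g (\<lambda>_. x)))) \<and>
     (\<forall>f\<in>F. \<forall>g\<in>F. (\<forall>s. R (\<lambda>_. f s) (\<lambda>_. g s)) \<longrightarrow> R f g))"

end

theory Submission
  imports Defs
begin

text \<open>
  (ii) \<Longrightarrow> (i): the criterion \<alpha> min_C + (1 - \<alpha>) max_D is Lipschitz along mixtures, affine
  under mixing with constants and strictly increasing in the pair (min_C, max_D); this gives
  continuity, certainty independence, monotonicity and the extension property.

  (i) \<Longrightarrow> (ii): a constant of utility min_C f is never strictly preferred to f, since
  continuity would produce a nearby comparison that the hope-and-prepare relation ranks the other
  way; dually for max_D f. Along the segment of constants between these two utility levels, the
  parameters where the constant is strictly better, resp. strictly worse, than f form disjoint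
  open subsets of [0,1], so by connectedness some constant is a certainty equivalent of f. Its
  utility V f represents the preference, is affine under mixing with constants and monotone in
  (min_C f, max_D f). The weight (max_D f - V f) / (max_D f - min_C f) is invariant under
  mixing with constants, and any two acts with min_C < max_D can be mixed with constants to
  the same pair (min_C, max_D), so the weight is one constant \<alpha>. If the hope-and-prepare
  relation is incomplete, some act has min_C f < max_D f, and that act determines \<alpha>.

  Minima and maxima are taken as Inf and Sup.
\<close>

definition simple_measurable :: "'a set set \<Rightarrow> ('a \<Rightarrow> 'c) \<Rightarrow> bool" where
  "simple_measurable Sig \<phi> \<longleftrightarrow> finite (range \<phi>) \<and> (\<forall>y. \<phi> -` {y} \<in> Sig)"

lemma simple_acts_iff: "f \<in> simple_acts Sig X \<longleftrightarrow> range f \<subseteq> X \<and> simple_measurable Sig f"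
  by (auto simp: simple_acts_def simple_measurable_def)

context
  fixes Sig :: "'a set set"
  assumes Sig: "algebra UNIV Sig"
begin

interpretation algebra UNIV Sig by (fact Sig)

lemma simple_measurable_const: "simple_measurable Sig (\<lambda>_. c)"
proof -
  have "(\<lambda>_::'a. c) -` {y} \<in> {{}, UNIV}" for y by auto
  then show ?thesis by (auto simp: simple_measurable_def)
qed

lemma simple_measurable_comp:
  assumes "simple_measurable Sig \<phi>"
  shows "simple_measurable Sig (\<lambda>s. h (\<phi> s))"
proof -
  have "(\<lambda>s. h (\<phi> s)) -` {y} = (\<Union>v\<in>{v\<in>range \<phi>. h v = y}. \<phi> -` {v})" for y by auto
  moreover have "range (\<lambda>s. h (\<phi> s)) = h ` range \<phi>" by auto
  ultimately show ?thesis using assms by (auto simp: simple_measurable_def)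
qed

lemma simple_measurable_pair:
  assumes "simple_measurable Sig \<phi>" and "simple_measurable Sig \<psi>"
  shows "simple_measurable Sig (\<lambda>s. (\<phi> s, \<psi> s))"
proof -
  have "range (\<lambda>s. (\<phi> s, \<psi> s)) \<subseteq> range \<phi> \<times> range \<psi>" by auto
  moreover have "(\<lambda>s. (\<phi> s, \<psi> s)) -` {(v, w)} = \<phi> -` {v} \<inter> \<psi> -` {w}" for v w by auto
  ultimately show ?thesis
    using assms by (auto simp: simple_measurable_def finite_subset)
qed

lemma fa_probs_empty: "p \<in> fa_probs Sig \<Longrightarrow> p {} = 0"
  unfolding fa_probs_def using empty_sets by fastforce

lemma fa_probs_finite_additive:
  assumes p: "p \<in> fa_probs Sig" and "finite I"
    and "\<And>i. i \<in> I \<Longrightarrow> B i \<in> Sig" and "disjoint_family_on B I"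
  shows "p (\<Union>i\<in>I. B i) = (\<Sum>i\<in>I. p (B i))"
  using assms(2-)
proof (induction I rule: finite_induct)
  case empty
  then show ?case using fa_probs_empty[OF p] by simp
next
  case (insert i I)
  have "B i \<inter> (\<Union>j\<in>I. B j) = {}"
    using insert.prems(2) insert.hyps(2) by (auto simp: disjoint_family_on_def)
  moreover have "(\<Union>j\<in>I. B j) \<in> Sig"
    using insert by (intro finite_UN) auto
  ultimately have "p (B i \<union> (\<Union>j\<in>I. B j)) = p (B i) + p (\<Union>j\<in>I. B j)"
    using p insert.prems(1) by (auto simp: fa_probs_def)
  then show ?case
    using insert disjoint_family_on_mono[of I "insert i I"] by auto
qed

lemma simple_int_comp:
  assumes p: "p \<in> fa_probs Sig" and k: "simple_measurable Sig k"
  shows "simple_int p (\<lambda>s. h (k s)) = (\<Sum>v\<in>range k. h v * p (k -` {v}))"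
proof -
  have fin: "finite (range k)" and meas: "\<And>v. k -` {v} \<in> Sig"
    using k by (auto simp: simple_measurable_def)
  have preimage: "p ((\<lambda>s. h (k s)) -` {y}) = (\<Sum>v\<in>{v\<in>range k. h v = y}. p (k -` {v}))" for y
  proof -
    have "(\<lambda>s. h (k s)) -` {y} = (\<Union>v\<in>{v\<in>range k. h v = y}. k -` {v})" by auto
    then show ?thesis
      by (simp only:) (rule fa_probs_finite_additive[OF p], auto simp: fin meas disjoint_family_on_def)
  qed
  have "range (\<lambda>s. h (k s)) = h ` range k" by auto
  then have "simple_int p (\<lambda>s. h (k s)) = (\<Sum>y\<in>h ` range k. y * p ((\<lambda>s. h (k s)) -` {y}))"
    by (simp add: simple_int_def)
  also have "\<dots> = (\<Sum>y\<in>h ` range k. \<Sum>v\<in>{v\<in>range k. h v = y}. h v * p (k -` {v}))"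
    unfolding preimage sum_distrib_left by (intro sum.cong) auto
  also have "\<dots> = (\<Sum>v\<in>range k. h v * p (k -` {v}))"
    using fin by (intro sum.group) auto
  finally show ?thesis .
qed

lemma simple_int_const: "p \<in> fa_probs Sig \<Longrightarrow> simple_int p (\<lambda>_. c) = c"
  using simple_int_comp[OF _ simple_measurable_const, of p "\<lambda>_. c" c]
  by (simp add: fa_probs_def)

lemma simple_int_lincomb:
  assumes p: "p \<in> fa_probs Sig" and "simple_measurable Sig \<phi>" "simple_measurable Sig \<psi>"
  shows "simple_int p (\<lambda>s. a * \<phi> s + b * \<psi> s) = a * simple_int p \<phi> + b * simple_int p \<psi>"
proof -
  let ?k = "\<lambda>s. (\<phi> s, \<psi> s)"
  have k: "simple_measurable Sig ?k" using assms by (intro simple_measurable_pair)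
  show ?thesis
    using simple_int_comp[OF p k, of "\<lambda>vw. a * fst vw + b * snd vw"]
      simple_int_comp[OF p k, of fst] simple_int_comp[OF p k, of snd]
    by (simp add: sum.distrib sum_distrib_left algebra_simps)
qed

lemma simple_int_add_const:
  assumes p: "p \<in> fa_probs Sig" and \<phi>: "simple_measurable Sig \<phi>"
  shows "simple_int p (\<lambda>s. \<phi> s + d) = simple_int p \<phi> + d"
  using simple_int_lincomb[OF p \<phi> simple_measurable_const[of 1], of 1 d]
  by (simp add: simple_int_const[OF p])

lemma simple_int_mono:
  assumes p: "p \<in> fa_probs Sig" and "simple_measurable Sig \<phi>" "simple_measurable Sig \<psi>"
    and le: "\<And>s. \<phi> s \<le> \<psi> s"
  shows "simple_int p \<phi> \<le> simple_int p \<psi>"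
proof -
  let ?k = "\<lambda>s. (\<phi> s, \<psi> s)"
  have k: "simple_measurable Sig ?k" using assms by (intro simple_measurable_pair)
  then have "0 \<le> p (?k -` {vw})" for vw
    using p by (auto simp: fa_probs_def simple_measurable_def)
  then have "(\<Sum>vw\<in>range ?k. fst vw * p (?k -` {vw})) \<le> (\<Sum>vw\<in>range ?k. snd vw * p (?k -` {vw}))"
    using le by (auto intro!: sum_mono mult_right_mono)
  then show ?thesis
    using simple_int_comp[OF p k, of fst] simple_int_comp[OF p k, of snd] by simp
qed

end

lemma cInf_image_affine:
  fixes a c :: real
  assumes "0 \<le> a" "S \<noteq> {}" "bdd_below S"
  shows "Inf ((\<lambda>t. a * t + c) ` S) = a * Inf S + c"
proof -
  have "mono (\<lambda>t. a * t + c)" using assms(1) by (auto simp: mono_def mult_left_mono)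
  moreover have "continuous (at_right (Inf S)) (\<lambda>t. a * t + c)" by (intro continuous_intros)
  ultimately show ?thesis using continuous_at_Inf_mono[of "\<lambda>t. a * t + c" S] assms(2,3) by simp
qed

lemma cSup_image_affine:
  fixes a c :: real
  assumes "0 \<le> a" "S \<noteq> {}" "bdd_above S"
  shows "Sup ((\<lambda>t. a * t + c) ` S) = a * Sup S + c"
proof -
  have "mono (\<lambda>t. a * t + c)" using assms(1) by (auto simp: mono_def mult_left_mono)
  moreover have "continuous (at_left (Sup S)) (\<lambda>t. a * t + c)" by (intro continuous_intros)
  ultimately show ?thesis using continuous_at_Sup_mono[of "\<lambda>t. a * t + c" S] assms(2,3) by simp
qed

lemma lipschitz_on_cINF:
  fixes e :: "'p \<Rightarrow> 'a::metric_space \<Rightarrow> real"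
  assumes C: "C \<noteq> {}" and bdd: "\<And>t. t \<in> T \<Longrightarrow> bdd_below ((\<lambda>p. e p t) ` C)"
    and lip: "\<And>p. p \<in> C \<Longrightarrow> B-lipschitz_on T (e p)"
  shows "B-lipschitz_on T (\<lambda>t. INF p\<in>C. e p t)"
proof (rule lipschitz_onI)
  have one_side: "(INF p\<in>C. e p s) \<le> (INF p\<in>C. e p t) + B * dist s t"
    if "s \<in> T" "t \<in> T" for s t
  proof -
    have "(INF p\<in>C. e p s) - B * dist s t \<le> (INF p\<in>C. e p t)"
    proof (rule cINF_greatest[OF C])
      fix p assume p: "p \<in> C"
      have "(INF p\<in>C. e p s) \<le> e p s" by (rule cINF_lower[OF bdd[OF that(1)] p])
      moreover have "e p s \<le> e p t + B * dist s t"
        using lipschitz_onD[OF lip[OF p] that] by (simp add: dist_real_def)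
      ultimately show "(INF p\<in>C. e p s) - B * dist s t \<le> e p t" by simp
    qed
    then show ?thesis by simp
  qed
  fix s t assume "s \<in> T" "t \<in> T"
  then show "dist (INF p\<in>C. e p s) (INF p\<in>C. e p t) \<le> B * dist s t"
    using one_side[of s t] one_side[of t s] by (simp add: dist_real_def dist_commute)
next
  show "0 \<le> B" using C lip lipschitz_on_nonneg by blast
qed

lemma lipschitz_on_cSUP:
  fixes e :: "'p \<Rightarrow> 'a::metric_space \<Rightarrow> real"
  assumes C: "C \<noteq> {}" and bdd: "\<And>t. t \<in> T \<Longrightarrow> bdd_above ((\<lambda>p. e p t) ` C)"
    and lip: "\<And>p. p \<in> C \<Longrightarrow> B-lipschitz_on T (e p)"
  shows "B-lipschitz_on T (\<lambda>t. SUP p\<in>C. e p t)"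
proof -
  have "B-lipschitz_on T (\<lambda>t. - (INF p\<in>C. - e p t))"
    using assms by (intro lipschitz_on_minus lipschitz_on_cINF) (auto simp: bdd_below_uminus_image)
  moreover have "- (INF p\<in>C. - e p t) = (SUP p\<in>C. e p t)" if "t \<in> T" for t
    using uminus_cSUP[OF bdd[OF that] C] by simp
  ultimately show ?thesis by (simp cong: lipschitz_on_cong)
qed

lemma openin_unit_interval_meets_interior:
  assumes "openin (top_of_set {0..1::real}) A" and "t \<in> A"
  shows "\<exists>s\<in>A. 0 < s \<and> s < 1"
proof -
  obtain T where T: "open T" "A = T \<inter> {0..1}"
    using assms(1) by (auto simp: openin_open)
  then have "T \<inter> closure {0<..<1::real} \<noteq> {}" using assms(2) by auto
  then have "T \<inter> {0<..<1} \<noteq> {}" using open_Int_closure_eq_empty[OF T(1)] by blast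
  then show ?thesis using T(2) by auto
qed

lemma convex_comb_strict_mono:
  fixes a x y x' y' :: real
  assumes "0 \<le> a" "a \<le> 1" "x' < x" "y' < y"
  shows "a * x' + (1 - a) * y' < a * x + (1 - a) * y"
proof (cases "a = 0")
  case False
  then have "a * x' < a * x" "(1 - a) * y' \<le> (1 - a) * y"
    using assms by (auto intro: mult_strict_left_mono mult_left_mono)
  then show ?thesis by linarith
qed (use assms in simp)

lemma convex_comb_less:
  fixes a x y x' y' :: real
  assumes "0 \<le> a" "a < 1" "x' \<le> x" "y' < y"
  shows "a * x' + (1 - a) * y' < a * x + (1 - a) * y"
proof -
  have "a * x' \<le> a * x" "(1 - a) * y' < (1 - a) * y"
    using assms by (auto intro: mult_left_mono mult_strict_left_mono)
  then show ?thesis by linarith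
qed

lemma nonpos_if_mix_less:
  fixes d e :: real
  assumes "0 < e" and less: "\<And>b. 0 < b \<Longrightarrow> b < 1 \<Longrightarrow> b * d < (1 - b) * e"
  shows "d \<le> 0"
proof (rule ccontr)
  assume "\<not> d \<le> 0"
  then have b: "0 < e / (e + d)" "e / (e + d) < 1" and eq: "e / (e + d) * d = (1 - e / (e + d)) * e"
    using \<open>0 < e\<close> by (auto simp: field_simps)
  have "e / (e + d) * d < (1 - e / (e + d)) * e" by (rule less[OF b])
  then show False by (simp only: eq)
qed

definition represents :: "('f \<Rightarrow> 'f \<Rightarrow> bool) \<Rightarrow> 'f set \<Rightarrow> ('f \<Rightarrow> real) \<Rightarrow> bool" where
  "represents R A V \<longleftrightarrow> (\<forall>f\<in>A. \<forall>g\<in>A. R f g \<longleftrightarrow> V g < V f)"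

lemma represents_eq_iff:
  "represents R A V \<Longrightarrow> f \<in> A \<Longrightarrow> g \<in> A \<Longrightarrow> V f = V g \<longleftrightarrow> \<not> R f g \<and> \<not> R g f"
  by (auto simp: represents_def)

lemma represents_rel_complete: "represents R A V \<Longrightarrow> rel_complete R A"
  unfolding rel_complete_def rel_equiv_def represents_def
  by (metis linorder_neqE_linordered_idom)

lemma mix_one [simp]: "mix 1 f g = f"
  by (simp add: mix_def)

lemma mix_zero [simp]: "mix 0 f g = g"
  by (simp add: mix_def)

lemma mix_const_const: "mix a (\<lambda>_. x) (\<lambda>_. y) = (\<lambda>_. a *\<^sub>R x + (1 - a) *\<^sub>R y)"
  by (simp add: mix_def)

definition EU :: "('b \<Rightarrow> real) \<Rightarrow> ('a set \<Rightarrow> real) \<Rightarrow> ('a \<Rightarrow> 'b) \<Rightarrow> real" where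
  "EU u p f = simple_int p (\<lambda>s. u (f s))"

lemma minEU_altdef: "minEU u C f = (INF p\<in>C. EU u p f)"
  by (simp add: minEU_def EU_def comp_def)

lemma maxEU_altdef: "maxEU u D f = (SUP p\<in>D. EU u p f)"
  by (simp add: maxEU_def EU_def comp_def)

locale hope_and_prepare =
  fixes Sig :: "'a set set" and X :: "'b::real_vector set" and u :: "'b \<Rightarrow> real"
    and C D :: "('a set \<Rightarrow> real) set"
  assumes algebra_Sig: "algebra UNIV Sig" and convex_X: "convex X" and affine_u: "affine_on X u"
    and nonconstant_u: "\<exists>x\<in>X. \<exists>y\<in>X. u x \<noteq> u y"
    and C_probs: "C \<subseteq> fa_probs Sig" and D_probs: "D \<subseteq> fa_probs Sig" and C_meets_D: "C \<inter> D \<noteq> {}"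
begin

abbreviation "F \<equiv> simple_acts Sig X"
abbreviation "mC \<equiv> minEU u C"
abbreviation "MD \<equiv> maxEU u D"

lemma act_in_X: "f \<in> F \<Longrightarrow> f s \<in> X"
  by (auto simp: simple_acts_iff)

lemma utility_measurable: "f \<in> F \<Longrightarrow> simple_measurable Sig (\<lambda>s. u (f s))"
  by (auto simp: simple_acts_iff intro: simple_measurable_comp[OF algebra_Sig])

lemma const_act: "x \<in> X \<Longrightarrow> (\<lambda>_. x) \<in> F"
  by (auto simp: simple_acts_iff simple_measurable_const[OF algebra_Sig])

lemma mix_in_X: "x \<in> X \<Longrightarrow> y \<in> X \<Longrightarrow> 0 \<le> a \<Longrightarrow> a \<le> 1 \<Longrightarrow> a *\<^sub>R x + (1 - a) *\<^sub>R y \<in> X"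
  using convexD[OF convex_X, of x y a "1 - a"] by simp

lemma u_mix:
  "x \<in> X \<Longrightarrow> y \<in> X \<Longrightarrow> 0 \<le> a \<Longrightarrow> a \<le> 1 \<Longrightarrow> u (a *\<^sub>R x + (1 - a) *\<^sub>R y) = a * u x + (1 - a) * u y"
  using affine_u by (simp add: affine_on_def)

lemma mix_act:
  assumes "f \<in> F" "g \<in> F" "0 \<le> a" "a \<le> 1"
  shows "mix a f g \<in> F"
proof -
  have "simple_measurable Sig (\<lambda>s. (f s, g s))"
    using assms by (intro simple_measurable_pair[OF algebra_Sig]) (simp_all add: simple_acts_iff)
  then have "simple_measurable Sig (\<lambda>s. (\<lambda>(v, w). a *\<^sub>R v + (1 - a) *\<^sub>R w) (f s, g s))"
    by (rule simple_measurable_comp[OF algebra_Sig])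
  moreover have "range (mix a f g) \<subseteq> X"
    using assms by (auto simp: mix_def act_in_X intro!: mix_in_X)
  ultimately show ?thesis by (simp add: simple_acts_iff mix_def)
qed

lemma mix_of_consts:
  assumes "x \<in> X" "y \<in> X" "0 \<le> t" "t \<le> 1"
  shows "\<exists>w\<in>X. mix t (\<lambda>_. x) (\<lambda>_. y) = (\<lambda>_. w) \<and> u w = t * u x + (1 - t) * u y"
  using assms by (intro bexI[of _ "t *\<^sub>R x + (1 - t) *\<^sub>R y"]) (simp_all add: mix_const_const mix_in_X u_mix)

lemma ex_utility_less: "\<exists>x\<in>X. \<exists>y\<in>X. u x < u y"
proof -
  obtain x y where xy: "x \<in> X" "y \<in> X" "u x \<noteq> u y" using nonconstant_u by blast
  then have "u x < u y \<or> u y < u x" by linarith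
  then show ?thesis using xy(1,2) by blast
qed

lemma ex_utility_between:
  assumes "x \<in> X" "y \<in> X" "u x \<le> t" "t \<le> u y"
  shows "\<exists>z\<in>X. u z = t"
proof (cases "u x = u y")
  case True
  then show ?thesis using assms by (metis order_antisym)
next
  case False
  define a where "a = (t - u x) / (u y - u x)"
  have "0 \<le> a" "a \<le> 1" "a * (u y - u x) = t - u x"
    using assms False by (auto simp: a_def field_simps)
  moreover have "a * u y + (1 - a) * u x = u x + a * (u y - u x)" by (simp add: algebra_simps)
  ultimately show ?thesis
    using u_mix[OF assms(2,1)] mix_in_X[OF assms(2,1)] by (intro bexI[of _ "a *\<^sub>R y + (1 - a) *\<^sub>R x"]) auto
qed

lemma EU_const: "p \<in> fa_probs Sig \<Longrightarrow> EU u p (\<lambda>_. x) = u x"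
  by (simp add: EU_def simple_int_const[OF algebra_Sig])

lemma EU_mix:
  assumes p: "p \<in> fa_probs Sig" and "f \<in> F" "g \<in> F" "0 \<le> a" "a \<le> 1"
  shows "EU u p (mix a f g) = a * EU u p f + (1 - a) * EU u p g"
proof -
  have "EU u p (mix a f g) = simple_int p (\<lambda>s. a * u (f s) + (1 - a) * u (g s))"
    using assms by (simp add: EU_def mix_def u_mix act_in_X)
  then show ?thesis
    using simple_int_lincomb[OF algebra_Sig p] assms by (simp add: EU_def utility_measurable)
qed

lemma EU_bounds:
  assumes f: "f \<in> F"
  shows "\<exists>x\<in>X. \<exists>y\<in>X. \<forall>p\<in>fa_probs Sig. u x \<le> EU u p f \<and> EU u p f \<le> u y"
proof -
  have fin: "finite (u ` range f)" using f by (auto simp: simple_acts_iff simple_measurable_def)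
  have ne: "u ` range f \<noteq> {}" by simp
  obtain s1 s2 where s12: "u (f s1) = Min (u ` range f)" "u (f s2) = Max (u ` range f)"
    using Min_in[OF fin ne] Max_in[OF fin ne] by auto
  then have below: "\<And>s. u (f s1) \<le> u (f s)" and above: "\<And>s. u (f s) \<le> u (f s2)"
    using fin by auto
  have "u (f s1) \<le> EU u p f \<and> EU u p f \<le> u (f s2)" if p: "p \<in> fa_probs Sig" for p
  proof -
    note mono = simple_int_mono[OF algebra_Sig p]
    note meas = simple_measurable_const[OF algebra_Sig] utility_measurable[OF f]
    have "simple_int p (\<lambda>_. u (f s1)) \<le> EU u p f"
      unfolding EU_def by (rule mono[OF meas below])
    moreover have "EU u p f \<le> simple_int p (\<lambda>_. u (f s2))"
      unfolding EU_def by (rule mono[OF meas(2,1) above])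
    ultimately show ?thesis by (simp add: simple_int_const[OF algebra_Sig p])
  qed
  then show ?thesis using act_in_X[OF f] by blast
qed

lemma EU_less_uniform:
  assumes f: "f \<in> F" and g: "g \<in> F" and less: "\<And>s. u (g s) < u (f s)"
  shows "\<exists>e>0. \<forall>p\<in>fa_probs Sig. EU u p g + e \<le> EU u p f"
proof -
  define d where "d s = u (f s) - u (g s)" for s
  have "simple_measurable Sig (\<lambda>s. (f s, g s))"
    using f g by (intro simple_measurable_pair[OF algebra_Sig]) (auto simp: simple_acts_iff)
  then have "finite (range d)"
    using finite_range_imageI[of "\<lambda>s. (f s, g s)" "\<lambda>(v, w). u v - u w"]
    by (simp add: d_def simple_measurable_def)
  define e where "e = Min (range d)"
  have "e > 0" "\<And>s. e \<le> d s"
    using \<open>finite (range d)\<close> less by (auto simp: e_def d_def)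
  moreover have "EU u p g + e \<le> EU u p f" if p: "p \<in> fa_probs Sig" and "\<And>s. e \<le> d s" for p
  proof -
    have "u (g s) + e \<le> u (f s)" for s
      using that(2)[of s] unfolding d_def by linarith
    then have "simple_int p (\<lambda>s. u (g s) + e) \<le> simple_int p (\<lambda>s. u (f s))"
      using simple_measurable_comp[OF algebra_Sig utility_measurable[OF g], of "\<lambda>v. v + e"]
      by (intro simple_int_mono[OF algebra_Sig p _ utility_measurable[OF f]])
    then show ?thesis
      by (simp add: EU_def simple_int_add_const[OF algebra_Sig p utility_measurable[OF g]])
  qed
  ultimately show ?thesis by blast
qed

lemma C_nonempty: "C \<noteq> {}" and D_nonempty: "D \<noteq> {}"
  using C_meets_D by auto

lemma bdd_below_EU: "f \<in> F \<Longrightarrow> bdd_below ((\<lambda>p. EU u p f) ` C)"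
  using EU_bounds C_probs unfolding bdd_below_def by blast

lemma bdd_above_EU: "f \<in> F \<Longrightarrow> bdd_above ((\<lambda>p. EU u p f) ` D)"
  using EU_bounds D_probs unfolding bdd_above_def by blast

lemma minEU_le: "f \<in> F \<Longrightarrow> p \<in> C \<Longrightarrow> mC f \<le> EU u p f"
  unfolding minEU_altdef by (rule cINF_lower[OF bdd_below_EU])

lemma minEU_greatest: "(\<And>p. p \<in> C \<Longrightarrow> c \<le> EU u p f) \<Longrightarrow> c \<le> mC f"
  unfolding minEU_altdef by (rule cINF_greatest[OF C_nonempty])

lemma maxEU_ge: "f \<in> F \<Longrightarrow> p \<in> D \<Longrightarrow> EU u p f \<le> MD f"
  unfolding maxEU_altdef by (rule cSUP_upper[OF _ bdd_above_EU])

lemma maxEU_least: "(\<And>p. p \<in> D \<Longrightarrow> EU u p f \<le> c) \<Longrightarrow> MD f \<le> c"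
  unfolding maxEU_altdef by (rule cSUP_least[OF D_nonempty])

lemma minEU_le_maxEU: "f \<in> F \<Longrightarrow> mC f \<le> MD f"
  using C_meets_D minEU_le maxEU_ge order_trans by blast

lemma minEU_const: "x \<in> X \<Longrightarrow> mC (\<lambda>_. x) = u x"
  using C_nonempty C_probs by (simp add: minEU_altdef EU_const subset_iff cong: INF_cong)

lemma maxEU_const: "x \<in> X \<Longrightarrow> MD (\<lambda>_. x) = u x"
  using D_nonempty D_probs by (simp add: maxEU_altdef EU_const subset_iff cong: SUP_cong)

lemma minEU_mix_const:
  assumes "f \<in> F" "x \<in> X" "0 \<le> a" "a \<le> 1"
  shows "mC (mix a f (\<lambda>_. x)) = a * mC f + (1 - a) * u x"
proof -
  have "mC (mix a f (\<lambda>_. x)) = (INF p\<in>C. a * EU u p f + (1 - a) * u x)"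
    using assms C_probs by (auto simp: minEU_altdef EU_mix EU_const const_act intro!: INF_cong)
  also have "\<dots> = Inf ((\<lambda>t. a * t + (1 - a) * u x) ` (\<lambda>p. EU u p f) ` C)"
    by (simp add: image_image)
  also have "\<dots> = a * mC f + (1 - a) * u x"
    using assms bdd_below_EU C_nonempty by (simp add: cInf_image_affine minEU_altdef)
  finally show ?thesis .
qed

lemma maxEU_mix_const:
  assumes "f \<in> F" "x \<in> X" "0 \<le> a" "a \<le> 1"
  shows "MD (mix a f (\<lambda>_. x)) = a * MD f + (1 - a) * u x"
proof -
  have "MD (mix a f (\<lambda>_. x)) = (SUP p\<in>D. a * EU u p f + (1 - a) * u x)"
    using assms D_probs by (auto simp: maxEU_altdef EU_mix EU_const const_act intro!: SUP_cong)
  also have "\<dots> = Sup ((\<lambda>t. a * t + (1 - a) * u x) ` (\<lambda>p. EU u p f) ` D)"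
    by (simp add: image_image)
  also have "\<dots> = a * MD f + (1 - a) * u x"
    using assms bdd_above_EU D_nonempty by (simp add: cSup_image_affine maxEU_altdef)
  finally show ?thesis .
qed

lemma minEU_maxEU_less:
  assumes "f \<in> F" "g \<in> F" "\<And>s. u (g s) < u (f s)"
  shows "mC g < mC f" "MD g < MD f"
proof -
  obtain e where e: "e > 0" "\<And>p. p \<in> fa_probs Sig \<Longrightarrow> EU u p g + e \<le> EU u p f"
    using EU_less_uniform[OF assms] by blast
  have "mC g + e \<le> mC f"
  proof (rule minEU_greatest)
    fix p assume "p \<in> C"
    then have "mC g \<le> EU u p g" "EU u p g + e \<le> EU u p f"
      using minEU_le[OF assms(2)] e(2) C_probs by auto
    then show "mC g + e \<le> EU u p f" by linarith
  qed
  then show "mC g < mC f" using e(1) by linarith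
  have "MD g \<le> MD f - e"
  proof (rule maxEU_least)
    fix p assume "p \<in> D"
    then have "EU u p f \<le> MD f" "EU u p g + e \<le> EU u p f"
      using maxEU_ge[OF assms(1)] e(2) D_probs by auto
    then show "EU u p g \<le> MD f - e" by linarith
  qed
  then show "MD g < MD f" using e(1) by linarith
qed

lemma ex_utility_eq:
  assumes "f \<in> F" "mC f \<le> t" "t \<le> MD f"
  shows "\<exists>x\<in>X. u x = t"
proof -
  obtain x y where xy: "x \<in> X" "y \<in> X" "\<forall>p\<in>fa_probs Sig. u x \<le> EU u p f \<and> EU u p f \<le> u y"
    using EU_bounds[OF assms(1)] by blast
  then have "u x \<le> mC f" "MD f \<le> u y"
    using C_probs D_probs by (auto intro!: minEU_greatest maxEU_least)
  then show ?thesis using ex_utility_between[OF xy(1,2)] assms(2,3) by simp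
qed

lemma EU_mix_lipschitz:
  assumes f: "f \<in> F" and g: "g \<in> F"
  shows "\<exists>B. \<forall>p\<in>fa_probs Sig. B-lipschitz_on {0..1} (\<lambda>t. EU u p (mix t f g))"
proof -
  obtain x1 x2 y1 y2 where bounds:
    "\<forall>p\<in>fa_probs Sig. u x1 \<le> EU u p f \<and> EU u p f \<le> u x2"
    "\<forall>p\<in>fa_probs Sig. u y1 \<le> EU u p g \<and> EU u p g \<le> u y2"
    using EU_bounds[OF f] EU_bounds[OF g] by blast
  define B where "B = \<bar>u x1\<bar> + \<bar>u x2\<bar> + \<bar>u y1\<bar> + \<bar>u y2\<bar>"
  have bound: "\<bar>EU u p f - EU u p g\<bar> \<le> B" if "p \<in> fa_probs Sig" for p
    using that bounds unfolding B_def by fastforce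
  have "B-lipschitz_on {0..1} (\<lambda>t. EU u p (mix t f g))" if p: "p \<in> fa_probs Sig" for p
  proof (rule lipschitz_onI)
    fix s t :: real assume "s \<in> {0..1}" "t \<in> {0..1}"
    then have "EU u p (mix s f g) - EU u p (mix t f g) = (s - t) * (EU u p f - EU u p g)"
      using f g p by (simp add: EU_mix algebra_simps)
    then show "dist (EU u p (mix s f g)) (EU u p (mix t f g)) \<le> B * dist s t"
      using mult_left_mono[OF bound[OF p] abs_ge_zero, of "s - t"]
      by (simp add: dist_real_def abs_mult mult.commute)
  qed (simp add: B_def)
  then show ?thesis by blast
qed

lemma continuous_on_minEU_mix:
  assumes "f \<in> F" "g \<in> F"
  shows "continuous_on {0..1} (\<lambda>t. mC (mix t f g))"
proof -
  obtain B where "\<forall>p\<in>fa_probs Sig. B-lipschitz_on {0..1} (\<lambda>t. EU u p (mix t f g))"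
    using EU_mix_lipschitz[OF assms] by blast
  then have "B-lipschitz_on {0..1} (\<lambda>t. INF p\<in>C. EU u p (mix t f g))"
    using assms C_probs by (intro lipschitz_on_cINF C_nonempty bdd_below_EU mix_act) auto
  then show ?thesis unfolding minEU_altdef by (rule lipschitz_on_continuous_on)
qed

lemma continuous_on_maxEU_mix:
  assumes "f \<in> F" "g \<in> F"
  shows "continuous_on {0..1} (\<lambda>t. MD (mix t f g))"
proof -
  obtain B where "\<forall>p\<in>fa_probs Sig. B-lipschitz_on {0..1} (\<lambda>t. EU u p (mix t f g))"
    using EU_mix_lipschitz[OF assms] by blast
  then have "B-lipschitz_on {0..1} (\<lambda>t. SUP p\<in>D. EU u p (mix t f g))"
    using assms D_probs by (intro lipschitz_on_cSUP D_nonempty bdd_above_EU mix_act) auto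
  then show ?thesis unfolding maxEU_altdef by (rule lipschitz_on_continuous_on)
qed

definition alpha_MEU :: "real \<Rightarrow> ('a \<Rightarrow> 'b) \<Rightarrow> real" where
  "alpha_MEU a f = a * mC f + (1 - a) * MD f"

lemma alpha_MEU_const: "x \<in> X \<Longrightarrow> alpha_MEU a (\<lambda>_. x) = u x"
  by (simp add: alpha_MEU_def minEU_const maxEU_const algebra_simps)

lemma alpha_MEU_mix_const:
  "f \<in> F \<Longrightarrow> x \<in> X \<Longrightarrow> 0 \<le> b \<Longrightarrow> b \<le> 1 \<Longrightarrow>
    alpha_MEU a (mix b f (\<lambda>_. x)) = b * alpha_MEU a f + (1 - b) * u x"
  by (simp add: alpha_MEU_def minEU_mix_const maxEU_mix_const algebra_simps)

lemma alpha_MEU_strict_mono: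
  "0 \<le> a \<Longrightarrow> a \<le> 1 \<Longrightarrow> mC g < mC f \<Longrightarrow> MD g < MD f \<Longrightarrow> alpha_MEU a g < alpha_MEU a f"
  unfolding alpha_MEU_def by (rule convex_comb_strict_mono)

lemma alpha_MEU_between:
  assumes "f \<in> F" "0 \<le> a" "a \<le> 1"
  shows "mC f \<le> alpha_MEU a f" "alpha_MEU a f \<le> MD f"
  using minEU_le_maxEU[OF assms(1)] assms(2,3) mult_left_mono[of "mC f" "MD f" a]
    mult_left_mono[of "mC f" "MD f" "1 - a"]
  by (simp_all add: alpha_MEU_def algebra_simps)

lemma alpha_MEU_invariant_biseparable:
  assumes a: "0 \<le> a" "a \<le> 1" and rep: "represents Rs F (alpha_MEU a)"
  shows "invariant_biseparable Sig X Rs"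
  unfolding invariant_biseparable_def Let_def
proof (intro conjI ballI allI impI)
  note Rs_iff = rep[unfolded represents_def, rule_format]
  show "rel_complete Rs F" using rep by (rule represents_rel_complete)
  fix f g h assume f: "f \<in> F" and g: "g \<in> F" and h: "h \<in> F"
  show "Rs f g \<Longrightarrow> \<not> Rs g f" using Rs_iff[OF f g] Rs_iff[OF g f] by simp
  show "\<not> Rs f g \<and> \<not> Rs g h \<Longrightarrow> \<not> Rs f h" using Rs_iff f g h by auto
  have cont: "continuous_on {0..1} (\<lambda>t. alpha_MEU a (mix t f g))"
    unfolding alpha_MEU_def
    using continuous_on_minEU_mix[OF f g] continuous_on_maxEU_mix[OF f g] by (intro continuous_intros)
  have "{t \<in> {0..1}. Rs (mix t f g) h} = {0..1} \<inter> (\<lambda>t. alpha_MEU a (mix t f g)) -` {alpha_MEU a h<..}"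
    "{t \<in> {0..1}. Rs h (mix t f g)} = {0..1} \<inter> (\<lambda>t. alpha_MEU a (mix t f g)) -` {..<alpha_MEU a h}"
    using Rs_iff[OF mix_act[OF f g] h] Rs_iff[OF h mix_act[OF f g]] by auto
  then show "openin (top_of_set {0..1}) {t \<in> {0..1}. Rs (mix t f g) h}"
    "openin (top_of_set {0..1}) {t \<in> {0..1}. Rs h (mix t f g)}"
    by (auto intro: continuous_openin_preimage_gen[OF cont])
next
  note Rs_iff = rep[unfolded represents_def, rule_format]
  fix f g x and b :: real
  assume f: "f \<in> F" and g: "g \<in> F" and x: "x \<in> X" and b: "0 < b \<and> b < 1"
  then show "Rs f g = Rs (mix b f (\<lambda>_. x)) (mix b g (\<lambda>_. x))"
    using Rs_iff[OF f g] Rs_iff[OF mix_act[OF f const_act[OF x]] mix_act[OF g const_act[OF x]]]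
    by (simp add: alpha_MEU_mix_const)
next
  note Rs_iff = rep[unfolded represents_def, rule_format]
  fix f g assume f: "f \<in> F" and g: "g \<in> F" and "\<forall>s. Rs (\<lambda>_. f s) (\<lambda>_. g s)"
  then have "u (g s) < u (f s)" for s
    using Rs_iff[OF const_act const_act, of "f s" "g s"] by (simp add: act_in_X alpha_MEU_const)
  then have "alpha_MEU a g < alpha_MEU a f"
    using minEU_maxEU_less[OF f g] alpha_MEU_strict_mono[OF a] by blast
  then show "Rs f g" using Rs_iff[OF f g] by simp
qed

lemma alpha_MEU_unique:
  assumes a: "0 \<le> a" "a \<le> 1" and b: "0 \<le> b" "b \<le> 1"
    and rep_a: "represents Rs F (alpha_MEU a)" and rep_b: "represents Rs F (alpha_MEU b)"
    and f: "f \<in> F" and nondegenerate: "mC f < MD f"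
  shows "a = b"
proof -
  obtain x where x: "x \<in> X" "u x = alpha_MEU a f"
    using ex_utility_eq[OF f alpha_MEU_between[OF f a]] by blast
  have "alpha_MEU b f = u x"
    using x represents_eq_iff[OF rep_a f const_act[OF x(1)]] represents_eq_iff[OF rep_b f const_act[OF x(1)]]
    by (simp add: alpha_MEU_const)
  moreover have "(a - b) * (MD f - mC f) = alpha_MEU b f - alpha_MEU a f"
    by (simp add: alpha_MEU_def algebra_simps)
  ultimately have "(a - b) * (MD f - mC f) = 0" using x(2) by simp
  then show ?thesis using nondegenerate by simp
qed

lemma ex_nondegenerate_if_incomplete:
  assumes "\<forall>f\<in>F. \<forall>g\<in>F. R f g \<longleftrightarrow> mC g < mC f \<and> MD g < MD f" and "\<not> rel_complete R F"
  shows "\<exists>f\<in>F. mC f < MD f"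
proof (rule ccontr)
  assume "\<not> ?thesis"
  then have "mC f = MD f" if "f \<in> F" for f
    using minEU_le_maxEU[OF that] that by force
  then have "represents R F mC" using assms(1) by (simp add: represents_def)
  then show False using assms(2) represents_rel_complete by blast
qed

lemma mix_const_match:
  fixes wf wg Mf Mg :: real
  assumes "0 < wf" "0 < wg"
  shows "\<exists>a b x y. 0 < a \<and> a < 1 \<and> 0 < b \<and> b < 1 \<and> x \<in> X \<and> y \<in> X \<and>
           a * wf = b * wg \<and> a * Mf + (1 - a) * u x = b * Mg + (1 - b) * u y"
proof -
  obtain z1 z2 where z: "z1 \<in> X" "z2 \<in> X" "u z1 < u z2" using ex_utility_less by blast
  define t0 where "t0 = (u z1 + u z2) / 2"
  obtain x where x: "x \<in> X" "u x = t0"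
    using ex_utility_between[OF z(1,2), of t0] z(3) by (auto simp: t0_def)
  \<comment> \<open>With weights a = e/wf and b = e/wg, T e is the utility that y must have; it tends to the
    attainable interior level t0 as e \<rightarrow> 0.\<close>
  define T where "T e = t0 + (e / wf * (Mf - t0) - e / wg * (Mg - t0)) / (1 - e / wg)" for e
  have "(T \<longlongrightarrow> t0) (at_right 0)"
  proof -
    have "(T \<longlongrightarrow> t0 + (0 / wf * (Mf - t0) - 0 / wg * (Mg - t0)) / (1 - 0 / wg)) (at_right 0)"
      unfolding T_def by (intro tendsto_intros) (use assms in auto)
    then show ?thesis by simp
  qed
  then have T_near: "\<forall>\<^sub>F e in at_right 0. u z1 < T e \<and> T e < u z2"
    using z(3) by (auto simp: t0_def intro!: eventually_conj order_tendstoD)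
  have "\<forall>\<^sub>F e in at_right 0. 0 < e \<and> e < wf \<and> e < wg"
    unfolding eventually_at_right_field using assms by (intro exI[of _ "min wf wg"]) auto
  then have "\<forall>\<^sub>F e in at_right 0. (0 < e \<and> e < wf \<and> e < wg) \<and> u z1 < T e \<and> T e < u z2"
    using T_near by (rule eventually_conj)
  then obtain e where e: "0 < e" "e < wf" "e < wg" "u z1 < T e" "T e < u z2"
    using eventually_happens'[OF trivial_limit_at_right_real] by blast
  obtain y where y: "y \<in> X" "u y = T e"
    using ex_utility_between[OF z(1,2), of "T e"] e(4,5) by auto
  define a b where "a = e / wf" and "b = e / wg"
  have ab: "0 < a" "a < 1" "0 < b" "b < 1" "a * wf = b * wg"
    using e(1-3) assms by (auto simp: a_def b_def)
  have "T e = t0 + (a * (Mf - t0) - b * (Mg - t0)) / (1 - b)"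
    by (simp add: T_def a_def b_def)
  then have "(1 - b) * T e = (1 - b) * t0 + (a * (Mf - t0) - b * (Mg - t0))"
    using ab(4) by (simp add: distrib_left)
  then have "a * Mf + (1 - a) * u x = b * Mg + (1 - b) * u y"
    using x(2) y(2) by (simp add: algebra_simps)
  then show ?thesis using ab x(1) y(1) by blast
qed

end

locale invariant_extension = hope_and_prepare +
  fixes Rs :: "('a \<Rightarrow> 'b) \<Rightarrow> ('a \<Rightarrow> 'b) \<Rightarrow> bool"
  assumes invariant_biseparable: "invariant_biseparable Sig X Rs"
    and extends: "\<And>f g. f \<in> simple_acts Sig X \<Longrightarrow> g \<in> simple_acts Sig X \<Longrightarrow>
      minEU u C g < minEU u C f \<Longrightarrow> maxEU u D g < maxEU u D f \<Longrightarrow> Rs f g"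
begin

lemma pref_asym: "f \<in> F \<Longrightarrow> g \<in> F \<Longrightarrow> Rs f g \<Longrightarrow> \<not> Rs g f"
  using invariant_biseparable unfolding invariant_biseparable_def Let_def by blast

lemma pref_negative_trans: "f \<in> F \<Longrightarrow> g \<in> F \<Longrightarrow> h \<in> F \<Longrightarrow> Rs f h \<Longrightarrow> Rs f g \<or> Rs g h"
  using invariant_biseparable unfolding invariant_biseparable_def Let_def by blast

lemma pref_openin:
  assumes "f \<in> F" "g \<in> F" "h \<in> F"
  shows "openin (top_of_set {0..1}) {t \<in> {0..1}. Rs (mix t f g) h}"
    "openin (top_of_set {0..1}) {t \<in> {0..1}. Rs h (mix t f g)}"
  using invariant_biseparable assms unfolding invariant_biseparable_def Let_def by blast+

lemma pref_mix_const_iff: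
  "f \<in> F \<Longrightarrow> g \<in> F \<Longrightarrow> x \<in> X \<Longrightarrow> 0 < b \<Longrightarrow> b < 1 \<Longrightarrow>
    Rs (mix b f (\<lambda>_. x)) (mix b g (\<lambda>_. x)) \<longleftrightarrow> Rs f g"
  using invariant_biseparable unfolding invariant_biseparable_def Let_def by blast

lemma pref_perturb_left:
  assumes "f \<in> F" "g \<in> F" "h \<in> F" "Rs f h"
  shows "\<exists>s. 0 < s \<and> s < 1 \<and> Rs (mix s f g) h"
  using openin_unit_interval_meets_interior[OF pref_openin(1)[OF assms(1-3)], of 1] assms(4) by auto

lemma pref_perturb_right:
  assumes "f \<in> F" "g \<in> F" "h \<in> F" "Rs h f"
  shows "\<exists>s. 0 < s \<and> s < 1 \<and> Rs h (mix s f g)"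
  using openin_unit_interval_meets_interior[OF pref_openin(2)[OF assms(1-3)], of 1] assms(4) by auto

lemma pref_const_if_less_minEU:
  assumes "f \<in> F" "x \<in> X" "u x < mC f"
  shows "Rs f (\<lambda>_. x)"
  using extends[OF assms(1) const_act[OF assms(2)]] minEU_le_maxEU[OF assms(1)] assms(3)
  by (simp add: minEU_const[OF assms(2)] maxEU_const[OF assms(2)])

lemma const_pref_if_maxEU_less:
  assumes "f \<in> F" "x \<in> X" "MD f < u x"
  shows "Rs (\<lambda>_. x) f"
  using extends[OF const_act[OF assms(2)] assms(1)] minEU_le_maxEU[OF assms(1)] assms(3)
  by (simp add: minEU_const[OF assms(2)] maxEU_const[OF assms(2)])

lemma not_const_pref_if_le_minEU:
  assumes f: "f \<in> F" and x: "x \<in> X" and le: "u x \<le> mC f"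
  shows "\<not> Rs (\<lambda>_. x) f"
proof
  assume pref: "Rs (\<lambda>_. x) f"
  show False
  proof (cases "\<exists>y\<in>X. u y < mC f")
    case True
    then obtain y where y: "y \<in> X" "u y < mC f" by blast
    obtain s where s: "0 < s" "s < 1" "Rs (mix s (\<lambda>_. x) (\<lambda>_. y)) f"
      using pref_perturb_left[OF const_act[OF x] const_act[OF y(1)] f pref] by blast
    obtain w where w: "w \<in> X" "mix s (\<lambda>_::'a. x) (\<lambda>_. y) = (\<lambda>_. w)" "u w = s * u x + (1 - s) * u y"
      using mix_of_consts[OF x y(1), of s] s(1,2) by auto
    have "s * u x + (1 - s) * u y < s * mC f + (1 - s) * mC f"
      using s(1,2) le y(2) by (intro convex_comb_less) auto
    then have "Rs f (\<lambda>_. w)" using w by (intro pref_const_if_less_minEU[OF f]) (simp_all add: algebra_simps)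
    then show False using pref_asym[OF const_act[OF w(1)] f] s(3) w(2) by simp
  next
    case False
    obtain z where z: "z \<in> X" "mC f < u z"
      using ex_utility_less False by (meson leI le_less_trans)
    obtain s where s: "0 < s" "s < 1" "Rs (\<lambda>_. x) (mix s f (\<lambda>_. z))"
      using pref_perturb_right[OF f const_act[OF z(1)] const_act[OF x] pref] by blast
    have "s * mC f + (1 - s) * mC f < mC (mix s f (\<lambda>_. z))"
      using s(1,2) z by (simp add: minEU_mix_const f convex_comb_less)
    then have "Rs (mix s f (\<lambda>_. z)) (\<lambda>_. x)"
      using le s(1,2) by (intro pref_const_if_less_minEU mix_act f const_act z(1) x) (simp_all add: algebra_simps)
    then show False using pref_asym[OF const_act[OF x] mix_act[OF f const_act[OF z(1)]]] s by simp
  qed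
qed

lemma not_pref_const_if_maxEU_le:
  assumes f: "f \<in> F" and x: "x \<in> X" and le: "MD f \<le> u x"
  shows "\<not> Rs f (\<lambda>_. x)"
proof
  assume pref: "Rs f (\<lambda>_. x)"
  show False
  proof (cases "\<exists>y\<in>X. MD f < u y")
    case True
    then obtain y where y: "y \<in> X" "MD f < u y" by blast
    obtain s where s: "0 < s" "s < 1" "Rs f (mix s (\<lambda>_. x) (\<lambda>_. y))"
      using pref_perturb_right[OF const_act[OF x] const_act[OF y(1)] f pref] by blast
    obtain w where w: "w \<in> X" "mix s (\<lambda>_::'a. x) (\<lambda>_. y) = (\<lambda>_. w)" "u w = s * u x + (1 - s) * u y"
      using mix_of_consts[OF x y(1), of s] s(1,2) by auto
    have "s * MD f + (1 - s) * MD f < s * u x + (1 - s) * u y"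
      using s(1,2) le y(2) by (intro convex_comb_less) auto
    then have "Rs (\<lambda>_. w) f" using w by (intro const_pref_if_maxEU_less[OF f]) (simp_all add: algebra_simps)
    then show False using pref_asym[OF f const_act[OF w(1)]] s(3) w(2) by simp
  next
    case False
    obtain z where z: "z \<in> X" "u z < MD f"
      using ex_utility_less False by (meson leI less_le_trans)
    obtain s where s: "0 < s" "s < 1" "Rs (mix s f (\<lambda>_. z)) (\<lambda>_. x)"
      using pref_perturb_left[OF f const_act[OF z(1)] const_act[OF x] pref] by blast
    have "MD (mix s f (\<lambda>_. z)) < s * MD f + (1 - s) * MD f"
      using s(1,2) z by (simp add: maxEU_mix_const f convex_comb_less)
    then have "Rs (\<lambda>_. x) (mix s f (\<lambda>_. z))"
      using le s(1,2) by (intro const_pref_if_maxEU_less mix_act f const_act z(1) x) (simp_all add: algebra_simps)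
    then show False using pref_asym[OF mix_act[OF f const_act[OF z(1)]] const_act[OF x]] s by simp
  qed
qed

lemma const_pref_iff: "x \<in> X \<Longrightarrow> y \<in> X \<Longrightarrow> Rs (\<lambda>_. x) (\<lambda>_. y) \<longleftrightarrow> u y < u x"
  using pref_const_if_less_minEU[OF const_act] not_const_pref_if_le_minEU[OF const_act]
  by (metis minEU_const not_less)

lemma ex_certainty_equivalent:
  assumes f: "f \<in> F"
  shows "\<exists>x\<in>X. mC f \<le> u x \<and> u x \<le> MD f \<and> \<not> Rs f (\<lambda>_. x) \<and> \<not> Rs (\<lambda>_. x) f"
proof (rule ccontr)
  assume no_ce: "\<not> ?thesis"
  obtain xm xM where x: "xm \<in> X" "u xm = mC f" "xM \<in> X" "u xM = MD f"
    using ex_utility_eq[OF f] minEU_le_maxEU[OF f] by (meson order_refl)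
  define c :: "real \<Rightarrow> 'a \<Rightarrow> 'b" where "c t = mix t (\<lambda>_. xm) (\<lambda>_. xM)" for t
  define A where "A = {t \<in> {0..1}. Rs (c t) f}"
  define B where "B = {t \<in> {0..1}. Rs f (c t)}"
  have "{0..1} \<subseteq> A \<union> B"
  proof
    fix t :: real assume t: "t \<in> {0..1}"
    then obtain w where w: "w \<in> X" "c t = (\<lambda>_. w)" "u w = alpha_MEU t f"
      using mix_of_consts[OF x(1,3), of t] x(2,4) by (auto simp: c_def alpha_MEU_def)
    then have "Rs f (c t) \<or> Rs (c t) f"
      using no_ce alpha_MEU_between[OF f, of t] t by auto
    then show "t \<in> A \<union> B" using t by (auto simp: A_def B_def)
  qed
  have act: "c t \<in> F" if "t \<in> {0..1}" for t
    using that x by (simp add: c_def mix_act const_act)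
  have "A \<inter> B = {}"
    using pref_asym[OF act f] unfolding A_def B_def by blast
  moreover have "0 \<in> A" "1 \<in> B"
  proof -
    have "c 0 = (\<lambda>_. xM)" "c 1 = (\<lambda>_. xm)" by (simp_all add: c_def)
    moreover have "0 \<in> A \<union> B" "1 \<in> A \<union> B"
      using \<open>{0..1} \<subseteq> A \<union> B\<close> by (simp_all add: subset_eq)
    ultimately show "0 \<in> A" "1 \<in> B"
      using not_const_pref_if_le_minEU[OF f x(1)] not_pref_const_if_maxEU_le[OF f x(3)]
      by (auto simp: A_def B_def x)
  qed
  moreover have "openin (top_of_set {0..1}) A" "openin (top_of_set {0..1}) B"
    unfolding A_def B_def c_def using pref_openin[OF const_act[OF x(1)] const_act[OF x(3)] f] by auto
  ultimately have "\<exists>E1 E2. openin (top_of_set {0..1}) E1 \<and> openin (top_of_set {0..1}) E2 \<and>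
      {0..1::real} \<subseteq> E1 \<union> E2 \<and> E1 \<inter> E2 = {} \<and> E1 \<noteq> {} \<and> E2 \<noteq> {}"
    using \<open>{0..1} \<subseteq> A \<union> B\<close> by (intro exI[of _ A] exI[of _ B]) auto
  then show False
    using connected_Icc[of "0::real" 1] unfolding connected_openin by blast
qed

definition certainty_equivalent :: "('a \<Rightarrow> 'b) \<Rightarrow> 'b" where
  "certainty_equivalent f =
     (SOME x. x \<in> X \<and> mC f \<le> u x \<and> u x \<le> MD f \<and> \<not> Rs f (\<lambda>_. x) \<and> \<not> Rs (\<lambda>_. x) f)"

definition ce_utility :: "('a \<Rightarrow> 'b) \<Rightarrow> real" where
  "ce_utility f = u (certainty_equivalent f)"

lemma certainty_equivalent:
  assumes "f \<in> F"
  shows "certainty_equivalent f \<in> X" "mC f \<le> ce_utility f" "ce_utility f \<le> MD f"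
    "\<not> Rs f (\<lambda>_. certainty_equivalent f)" "\<not> Rs (\<lambda>_. certainty_equivalent f) f"
  using someI_ex[OF ex_certainty_equivalent[OF assms, unfolded Bex_def]]
  unfolding ce_utility_def certainty_equivalent_def by blast+

lemma const_pref_iff_ce_utility:
  assumes f: "f \<in> F" and x: "x \<in> X"
  shows "Rs (\<lambda>_. x) f \<longleftrightarrow> ce_utility f < u x"
    and "Rs f (\<lambda>_. x) \<longleftrightarrow> u x < ce_utility f"
proof -
  note ce = certainty_equivalent[OF f]
  have c: "(\<lambda>_. certainty_equivalent f) \<in> F" "(\<lambda>_. x) \<in> F" using ce(1) x by (simp_all add: const_act)
  show "Rs (\<lambda>_. x) f \<longleftrightarrow> ce_utility f < u x"
    using pref_negative_trans[OF c(2) c(1) f] pref_negative_trans[OF c(2) f c(1)] ce(4,5)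
      const_pref_iff[OF x ce(1)] by (auto simp: ce_utility_def)
  show "Rs f (\<lambda>_. x) \<longleftrightarrow> u x < ce_utility f"
    using pref_negative_trans[OF f c(1) c(2)] pref_negative_trans[OF c(1) f c(2)] ce(4,5)
      const_pref_iff[OF ce(1) x] by (auto simp: ce_utility_def)
qed

lemma ce_utility_eqI:
  assumes "f \<in> F" "x \<in> X" "\<not> Rs f (\<lambda>_. x)" "\<not> Rs (\<lambda>_. x) f"
  shows "ce_utility f = u x"
  using const_pref_iff_ce_utility[OF assms(1,2)] assms(3,4) by simp

lemma ce_utility_represents: "represents Rs F ce_utility"
  unfolding represents_def
proof (intro ballI)
  fix f g assume f: "f \<in> F" and g: "g \<in> F"
  note ce = certainty_equivalent[OF f]
  have c: "(\<lambda>_. certainty_equivalent f) \<in> F" using ce(1) by (simp add: const_act)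
  show "Rs f g \<longleftrightarrow> ce_utility g < ce_utility f"
    using pref_negative_trans[OF f c g] pref_negative_trans[OF c f g] ce(4,5)
      const_pref_iff_ce_utility(1)[OF g ce(1)] by (auto simp: ce_utility_def)
qed

lemma ce_utility_mix_const:
  assumes f: "f \<in> F" and x: "x \<in> X" and b: "0 < b" "b < 1"
  shows "ce_utility (mix b f (\<lambda>_. x)) = b * ce_utility f + (1 - b) * u x"
proof -
  note ce = certainty_equivalent[OF f]
  obtain w where w: "w \<in> X" and eq: "mix b (\<lambda>_::'a. certainty_equivalent f) (\<lambda>_. x) = (\<lambda>_. w)"
    and "u w = b * ce_utility f + (1 - b) * u x"
    using mix_of_consts[OF ce(1) x, of b] b by (auto simp: ce_utility_def)
  have "\<not> Rs (mix b f (\<lambda>_. x)) (\<lambda>_. w)" "\<not> Rs (\<lambda>_. w) (mix b f (\<lambda>_. x))"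
    using ce(4,5) pref_mix_const_iff[OF f const_act[OF ce(1)] x b, unfolded eq]
      pref_mix_const_iff[OF const_act[OF ce(1)] f x b, unfolded eq] by simp_all
  then show ?thesis
    using ce_utility_eqI[OF mix_act[OF f const_act[OF x]] w] b \<open>u w = _\<close> by simp
qed

lemma ce_utility_mono:
  assumes f: "f \<in> F" and g: "g \<in> F" and "mC g \<le> mC f" "MD g \<le> MD f"
  shows "ce_utility g \<le> ce_utility f"
proof -
  obtain z1 z2 where z: "z1 \<in> X" "z2 \<in> X" "u z1 < u z2" using ex_utility_less by blast
  have "b * (ce_utility g - ce_utility f) < (1 - b) * (u z2 - u z1)" if b: "0 < b" "b < 1" for b
  proof -
    let ?f = "mix b f (\<lambda>_. z2)" and ?g = "mix b g (\<lambda>_. z1)"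
    have acts: "?f \<in> F" "?g \<in> F" using b f g z by (simp_all add: mix_act const_act)
    have "mC ?g < mC ?f" "MD ?g < MD ?f"
      using assms b z by (simp_all add: minEU_mix_const maxEU_mix_const convex_comb_less)
    then have "ce_utility ?g < ce_utility ?f"
      using extends[OF acts] ce_utility_represents acts by (simp add: represents_def)
    then show ?thesis
      using b z f g by (simp add: ce_utility_mix_const algebra_simps)
  qed
  then show ?thesis using nonpos_if_mix_less[of "u z2 - u z1"] z(3) by force
qed

definition pessimism :: "('a \<Rightarrow> 'b) \<Rightarrow> real" where
  "pessimism f = (MD f - ce_utility f) / (MD f - mC f)"

lemma pessimism_mix_const:
  assumes "f \<in> F" "x \<in> X" "0 < b" "b < 1"
  shows "pessimism (mix b f (\<lambda>_. x)) = pessimism f"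
proof -
  have "pessimism (mix b f (\<lambda>_. x)) = (b * (MD f - ce_utility f)) / (b * (MD f - mC f))"
    using assms by (simp add: pessimism_def minEU_mix_const maxEU_mix_const ce_utility_mix_const
        algebra_simps)
  then show ?thesis using assms(3) by (simp add: pessimism_def)
qed

lemma pessimism_eq:
  assumes f: "f \<in> F" and g: "g \<in> F" and "mC f < MD f" "mC g < MD g"
  shows "pessimism f = pessimism g"
proof -
  obtain a b x y where ab: "0 < a" "a < 1" "0 < b" "b < 1" and xy: "x \<in> X" "y \<in> X"
    and width: "a * (MD f - mC f) = b * (MD g - mC g)"
    and top: "a * MD f + (1 - a) * u x = b * MD g + (1 - b) * u y"
    using mix_const_match[of "MD f - mC f" "MD g - mC g" "MD f" "MD g"] assms(3,4) by auto
  let ?f = "mix a f (\<lambda>_. x)" and ?g = "mix b g (\<lambda>_. y)"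
  have acts: "?f \<in> F" "?g \<in> F" using ab f g xy by (simp_all add: mix_act const_act)
  have "MD ?f = MD ?g" using ab f g xy top by (simp add: maxEU_mix_const)
  moreover have "MD ?f - mC ?f = MD ?g - mC ?g"
    using ab f g xy width by (simp add: maxEU_mix_const minEU_mix_const algebra_simps)
  ultimately have "mC ?f = mC ?g" by simp
  then have "ce_utility ?f = ce_utility ?g"
    using ce_utility_mono[OF acts] ce_utility_mono[OF acts(2,1)] \<open>MD ?f = MD ?g\<close> by simp
  then have "pessimism ?f = pessimism ?g"
    using \<open>MD ?f = MD ?g\<close> \<open>mC ?f = mC ?g\<close> by (simp add: pessimism_def)
  then show ?thesis using pessimism_mix_const ab f g xy by simp
qed

lemma ce_utility_alpha_MEU: "\<exists>a\<in>{0..1}. \<forall>f\<in>F. ce_utility f = alpha_MEU a f"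
proof -
  obtain a where a: "a \<in> {0..1}" and pess: "\<And>f. f \<in> F \<Longrightarrow> mC f < MD f \<Longrightarrow> pessimism f = a"
  proof (cases "\<exists>f0\<in>F. mC f0 < MD f0")
    case True
    then obtain f0 where f0: "f0 \<in> F" "mC f0 < MD f0" by blast
    have "pessimism f0 \<in> {0..1}"
      using f0 certainty_equivalent(2,3)[OF f0(1)] by (auto simp: pessimism_def field_simps)
    then show thesis using that pessimism_eq[OF _ f0(1) _ f0(2)] by blast
  qed (use that[of 0] in auto)
  have "ce_utility f = alpha_MEU a f" if f: "f \<in> F" for f
  proof (cases "mC f < MD f")
    case True
    then show ?thesis using pess[OF f True] by (simp add: pessimism_def alpha_MEU_def field_simps)
  next
    case False
    then have "mC f = MD f" using minEU_le_maxEU[OF f] by simp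
    then show ?thesis
      using certainty_equivalent(2,3)[OF f] by (simp add: alpha_MEU_def algebra_simps)
  qed
  then show ?thesis using a by blast
qed

lemma ex_alpha_MEU_represents: "\<exists>a\<in>{0..1}. represents Rs F (alpha_MEU a)"
  using ce_utility_alpha_MEU ce_utility_represents by (auto simp: represents_def)

end

context hope_and_prepare
begin

lemma invariant_biseparable_extension_iff_alpha_MEU:
  "(invariant_biseparable Sig X Rs \<and> (\<forall>f\<in>F. \<forall>g\<in>F. mC g < mC f \<and> MD g < MD f \<longrightarrow> Rs f g))
    \<longleftrightarrow> (\<exists>a\<in>{0..1}. represents Rs F (alpha_MEU a))"
proof
  assume ext: "invariant_biseparable Sig X Rs \<and> (\<forall>f\<in>F. \<forall>g\<in>F. mC g < mC f \<and> MD g < MD f \<longrightarrow> Rs f g)"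
  interpret invariant_extension Sig X u C D Rs
    by (intro invariant_extension.intro hope_and_prepare_axioms invariant_extension_axioms.intro)
      (use ext in blast)+
  show "\<exists>a\<in>{0..1}. represents Rs F (alpha_MEU a)" by (rule ex_alpha_MEU_represents)
next
  assume "\<exists>a\<in>{0..1}. represents Rs F (alpha_MEU a)"
  then obtain a where a: "0 \<le> a" "a \<le> 1" and rep: "represents Rs F (alpha_MEU a)" by auto
  have "Rs f g" if "f \<in> F" "g \<in> F" "mC g < mC f" "MD g < MD f" for f g
    using rep alpha_MEU_strict_mono[OF a that(3,4)] that(1,2) by (simp add: represents_def)
  then show "invariant_biseparable Sig X Rs \<and> (\<forall>f\<in>F. \<forall>g\<in>F. mC g < mC f \<and> MD g < MD f \<longrightarrow> Rs f g)"
    using alpha_MEU_invariant_biseparable[OF a rep] by blast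
qed

end

theorem theorem3:
  fixes Sig :: "'a set set" and X :: "'b::real_vector set"
    and R Rs :: "('a \<Rightarrow> 'b) \<Rightarrow> ('a \<Rightarrow> 'b) \<Rightarrow> bool"
    and u :: "'b \<Rightarrow> real" and C D :: "('a set \<Rightarrow> real) set"
  assumes "algebra UNIV Sig"
    and "convex X" and "\<exists>x\<in>X. \<exists>y\<in>X. x \<noteq> y"
    and "unique_hp_rep Sig X R u C D"
  shows "(invariant_biseparable Sig X Rs \<and>
          (\<forall>f\<in>simple_acts Sig X. \<forall>g\<in>simple_acts Sig X. R f g \<longrightarrow> Rs f g))
     \<longleftrightarrow>
         ((\<exists>a\<in>{0..1::real}. \<forall>f\<in>simple_acts Sig X. \<forall>g\<in>simple_acts Sig X.
              Rs f g \<longleftrightarrow> a * minEU u C f + (1 - a) * maxEU u D f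
                          > a * minEU u C g + (1 - a) * maxEU u D g) \<and>
          (\<not> rel_complete R (simple_acts Sig X) \<longrightarrow>
             (\<forall>a\<in>{0..1::real}. \<forall>b\<in>{0..1::real}.
                (\<forall>f\<in>simple_acts Sig X. \<forall>g\<in>simple_acts Sig X.
                   Rs f g \<longleftrightarrow> a * minEU u C f + (1 - a) * maxEU u D f
                               > a * minEU u C g + (1 - a) * maxEU u D g) \<and>
                (\<forall>f\<in>simple_acts Sig X. \<forall>g\<in>simple_acts Sig X.
                   Rs f g \<longleftrightarrow> b * minEU u C f + (1 - b) * maxEU u D f
                               > b * minEU u C g + (1 - b) * maxEU u D g)
                \<longrightarrow> a = b)))"
proof -
  have hp: "hp_rep Sig X R u C D" using assms(4) unfolding unique_hp_rep_def by blast
  interpret hope_and_prepare Sig X u C D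
    using hp assms(1,2) unfolding hp_rep_def hope_and_prepare_def by blast
  have R_iff: "\<forall>f\<in>F. \<forall>g\<in>F. R f g \<longleftrightarrow> mC g < mC f \<and> MD g < MD f"
    using hp unfolding hp_rep_def by blast
  have alpha_MEU_iff: "(\<forall>f\<in>F. \<forall>g\<in>F. Rs f g \<longleftrightarrow> a * mC f + (1 - a) * MD f > a * mC g + (1 - a) * MD g)
      \<longleftrightarrow> represents Rs F (alpha_MEU a)" for a
    by (simp add: represents_def alpha_MEU_def)
  have "(\<forall>f\<in>F. \<forall>g\<in>F. R f g \<longrightarrow> Rs f g) \<longleftrightarrow> (\<forall>f\<in>F. \<forall>g\<in>F. mC g < mC f \<and> MD g < MD f \<longrightarrow> Rs f g)"
    using R_iff by auto
  moreover have "a = b"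
    if "\<not> rel_complete R F" "a \<in> {0..1}" "b \<in> {0..1}"
      "represents Rs F (alpha_MEU a)" "represents Rs F (alpha_MEU b)" for a b
    using ex_nondegenerate_if_incomplete[OF R_iff that(1)] alpha_MEU_unique that(2-) by auto
  ultimately show ?thesis
    unfolding alpha_MEU_iff using invariant_biseparable_extension_iff_alpha_MEU[of Rs] by blast
qed

end
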